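(* Let scalar functions $S_n(t),\bar S_n(t),v_n(t)$ ($n\in\mathbb{Z}$) satisfy \begin{align*} \mathrm{i}\,S_{n,t}&=v_n(S_{n+1}+S_{n-1})-cS_n,\qquad \mathrm{i}\,\bar S_{n,t}=-v_n(\bar S_{n+1}+\bar S_{n-1})+c\bar S_n,\\ v_{n,t}&=\tfrac12 v_n\,\Delta_n^+\big(S_n\bar S_{n-1}+S_{n-1}\bar S_n\big), \end{align*} with $c$ constant. Then \begin{align*} &\Big\{v_n(S_{n+1}+S_{n-1})(\bar S_{n+1}+\bar S_{n-1})+\tfrac{\mathrm{i}}{4}\big[(S_{n+1}\bar S_n)^2-(S_n\bar S_{n+1})^2\big]\Big\}_t\\ &=\Delta_n^+\Big\{-\mathrm{i}\,v_nv_{n-1}\big[(S_{n+1}+S_{n-1})(\bar S_n+\bar S_{n-2})-(S_n+S_{n-2})(\bar S_{n+1}+\bar S_{n-1})\big]\\ &\qquad+\tfrac12 v_n\big[S_{n-1}\bar S_{n-1}(S_n\bar S_{n-1}+S_{n-1}\bar S_n)+S_{n+1}\bar S_{n-1}S_n\bar S_{n-1}+S_{n-1}\bar S_{n+1}S_{n-1}\bar S_n\big]\Big\}. \end{align*}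
   Context: $\Delta_n^+f_n:=f_{n+1}-f_n$; $\bar S_n$ is an independent variable (not necessarily the complex conjugate of $S_n$). *)

theory Defs
  imports "HOL-Analysis.Analysis"
begin

end

theory Submission
  imports Defs
begin

text \<open>The conservation law is a pointwise algebraic identity: by the product rule the time
  derivative of the density is a polynomial in the fields and their time derivatives, and after
  the equations of motion are used to eliminate the derivatives it equals the difference of the
  fluxes at sites \<open>n + 1\<close> and \<open>n\<close>. Only the sites \<open>n - 2, \<dots>, n + 2\<close> enter; below,
  \<open>Sm2, Sm, S0, S1, S2\<close> are the values of \<open>S\<close> there, \<open>B\<close> stands for \<open>Sb\<close>, and \<open>vm, v0, vp\<close>
  are \<open>v\<close> at \<open>n - 1, n, n + 1\<close>.\<close>

lemma complex_eq_neg_i_mult_if_i_mult_eq: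
  fixes x y :: complex
  assumes "\<i> * x = y"
  shows "x = - \<i> * y"
  using assms by (auto simp: algebra_simps)

lemma local_conservation_identity:
  fixes c vm v0 vp dv0 Sm2 Sm S0 S1 S2 Bm2 Bm B0 B1 B2 dSm dS0 dS1 dBm dB0 dB1 :: complex
  assumes dSm: "\<i> * dSm = vm * (S0 + Sm2) - c * Sm"
      and dS0: "\<i> * dS0 = v0 * (S1 + Sm) - c * S0"
      and dS1: "\<i> * dS1 = vp * (S2 + S0) - c * S1"
      and dBm: "\<i> * dBm = - vm * (B0 + Bm2) + c * Bm"
      and dB0: "\<i> * dB0 = - v0 * (B1 + Bm) + c * B0"
      and dB1: "\<i> * dB1 = - vp * (B2 + B0) + c * B1"
      and dv0: "dv0 = 1/2 * v0 * ((S1 * B0 + S0 * B1) - (S0 * Bm + Sm * B0))"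
  shows "v0 * (S1 + Sm) * (dB1 + dBm) + (v0 * (dS1 + dSm) + dv0 * (S1 + Sm)) * (B1 + Bm)
           + \<i>/4 * (2 * (S1 * B0) * (S1 * dB0 + dS1 * B0) - 2 * (S0 * B1) * (S0 * dB1 + dS0 * B1))
         = (- \<i> * vp * v0 * ((S2 + S0) * (B1 + Bm) - (S1 + Sm) * (B2 + B0))
             + 1/2 * vp * (S0 * B0 * (S1 * B0 + S0 * B1) + S2 * B0 * S1 * B0 + S0 * B2 * S0 * B1))
         - (- \<i> * v0 * vm * ((S1 + Sm) * (B0 + Bm2) - (S0 + Sm2) * (B1 + Bm))
             + 1/2 * v0 * (Sm * Bm * (S0 * Bm + Sm * B0) + S1 * Bm * S0 * Bm + Sm * B1 * Sm * B0))"
  unfolding dv0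
    complex_eq_neg_i_mult_if_i_mult_eq[OF dSm] complex_eq_neg_i_mult_if_i_mult_eq[OF dS0]
    complex_eq_neg_i_mult_if_i_mult_eq[OF dS1] complex_eq_neg_i_mult_if_i_mult_eq[OF dBm]
    complex_eq_neg_i_mult_if_i_mult_eq[OF dB0] complex_eq_neg_i_mult_if_i_mult_eq[OF dB1]
  using complex_i_mult_minus[of 1] by algebra

theorem mainTheorem7:
  fixes S Sb v S' Sb' v' :: "int \<Rightarrow> real \<Rightarrow> complex" and c :: complex
  assumes dS: "\<And>n t. (S n has_vector_derivative S' n t) (at t)"
      and dSb: "\<And>n t. (Sb n has_vector_derivative Sb' n t) (at t)"
      and dv: "\<And>n t. (v n has_vector_derivative v' n t) (at t)"
      and eqS: "\<And>n t. \<i> * S' n t = v n t * (S (n+1) t + S (n-1) t) - c * S n t"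
      and eqSb: "\<And>n t. \<i> * Sb' n t = - v n t * (Sb (n+1) t + Sb (n-1) t) + c * Sb n t"
      and eqv: "\<And>n t. v' n t = 1/2 * v n t *
                 ((S (n+1) t * Sb n t + S n t * Sb (n+1) t) - (S n t * Sb (n-1) t + S (n-1) t * Sb n t))"
  shows "((\<lambda>t. v n t * (S (n+1) t + S (n-1) t) * (Sb (n+1) t + Sb (n-1) t)
              + \<i>/4 * ((S (n+1) t * Sb n t)^2 - (S n t * Sb (n+1) t)^2))
          has_vector_derivative
          (let G = (\<lambda>m. - \<i> * v m t * v (m-1) t *
                       ((S (m+1) t + S (m-1) t) * (Sb m t + Sb (m-2) t)
                        - (S m t + S (m-2) t) * (Sb (m+1) t + Sb (m-1) t))
                     + 1/2 * v m t * (S (m-1) t * Sb (m-1) t * (S m t * Sb (m-1) t + S (m-1) t * Sb m t)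
                        + S (m+1) t * Sb (m-1) t * S m t * Sb (m-1) t
                        + S (m-1) t * Sb (m+1) t * S (m-1) t * Sb m t))
           in G (n+1) - G n)) (at t)"
proof -
  have sites: "n + 1 + 1 = n + 2" "n + 1 - 1 = n" "n + 1 - 2 = n - 1" "n - 1 + 1 = n" "n - 1 - 1 = n - 2"
    by simp_all
  have product_rule:
    "((\<lambda>t. v n t * (S (n+1) t + S (n-1) t) * (Sb (n+1) t + Sb (n-1) t)
         + \<i>/4 * ((S (n+1) t * Sb n t) * (S (n+1) t * Sb n t) - (S n t * Sb (n+1) t) * (S n t * Sb (n+1) t)))
      has_vector_derivative
       (v n t * (S (n+1) t + S (n-1) t) * (Sb' (n+1) t + Sb' (n-1) t)
         + (v n t * (S' (n+1) t + S' (n-1) t) + v' n t * (S (n+1) t + S (n-1) t)) * (Sb (n+1) t + Sb (n-1) t)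
         + \<i>/4 * ((S (n+1) t * Sb n t) * (S (n+1) t * Sb' n t + S' (n+1) t * Sb n t)
             + (S (n+1) t * Sb' n t + S' (n+1) t * Sb n t) * (S (n+1) t * Sb n t)
             - ((S n t * Sb (n+1) t) * (S n t * Sb' (n+1) t + S' n t * Sb (n+1) t)
             + (S n t * Sb' (n+1) t + S' n t * Sb (n+1) t) * (S n t * Sb (n+1) t)))))
      (at t)"
    by (intro has_vector_derivative_add has_vector_derivative_mult has_vector_derivative_mult_right
          has_vector_derivative_diff dS dSb dv)
  note identity = local_conservation_identity
    [OF eqS[of "n - 1" t, unfolded sites] eqS[of n t] eqS[of "n + 1" t, unfolded sites]
        eqSb[of "n - 1" t, unfolded sites] eqSb[of n t] eqSb[of "n + 1" t, unfolded sites]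
        eqv[of n t]]
  show ?thesis
    unfolding Let_def power2_eq_square sites
    by (rule has_vector_derivative_eq_rhs[OF product_rule]) (use identity in algebra)
qed

end
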